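(* Let $\mathbb{Q}$ be a path measure on $[0,T]$ in $\mathbb{R}^d$, let $\Pi^*$ be a distribution on $\mathbb{R}^d$, let $\mathbb{Q}^x=\mathbb{Q}(\cdot\mid Z_T=x)$ and $\mathbb{Q}^{\Pi^*}=\int\mathbb{Q}^x\,\Pi^*(dx)$. Assume the Radon–Nikodym derivative $\pi^*(z)=\frac{d\Pi^*}{d\mathbb{Q}_T}(z)$ exists and is positive everywhere. Then $\mathbb{Q}^{\Pi^*}$ is Markov if and only if $\mathbb{Q}$ is Markov.
   Context: $\mathbb{Q}_T$ denotes the law of $Z_T$ under $\mathbb{Q}$; $\mathbb{Q}^{\Pi^*}$ is the law of a path obtained by drawing $x\sim\Pi^*$ then $Z\sim\mathbb{Q}^x$. *)

theory Defs
  imports "HOL-Probability.Probability"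
begin

text \<open>Canonical path space of paths on [0,T] with values in a Euclidean space;
  the coordinate process is Z_t(omega) = omega t.\<close>
definition path_space :: "real \<Rightarrow> (real \<Rightarrow> 'a::euclidean_space) measure" where
  "path_space T = PiM {0..T} (\<lambda>_. borel)"

definition past_alg :: "real \<Rightarrow> real \<Rightarrow> (real \<Rightarrow> 'a::euclidean_space) measure" where
  "past_alg T s = sigma (space (path_space T))
     {(\<lambda>\<omega>. \<omega> r) -` B \<inter> space (path_space T) | r B. r \<in> {0..s} \<and> B \<in> sets (borel :: 'a measure)}"

definition present_alg :: "real \<Rightarrow> real \<Rightarrow> (real \<Rightarrow> 'a::euclidean_space) measure" where
  "present_alg T s = vimage_algebra (space (path_space T)) (\<lambda>\<omega>. \<omega> s) (borel :: 'a measure)"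

definition markov_path :: "real \<Rightarrow> (real \<Rightarrow> 'a::euclidean_space) measure \<Rightarrow> bool" where
  "markov_path T M \<longleftrightarrow>
     (\<forall>s t (f :: 'a \<Rightarrow> real). 0 \<le> s \<longrightarrow> s \<le> t \<longrightarrow> t \<le> T \<longrightarrow>
        f \<in> borel_measurable borel \<longrightarrow> bounded (range f) \<longrightarrow>
        (AE \<omega> in M. real_cond_exp M (past_alg T s) (\<lambda>\<omega>. f (\<omega> t)) \<omega>
                   = real_cond_exp M (present_alg T s) (\<lambda>\<omega>. f (\<omega> t)) \<omega>))"

definition terminal_law :: "real \<Rightarrow> (real \<Rightarrow> 'a::euclidean_space) measure \<Rightarrow> 'a measure" where
  "terminal_law T M = distr M borel (\<lambda>\<omega>. \<omega> T)"

text \<open>K is a regular conditional distribution of M given Z_T: K x = M( . | Z_T = x).\<close>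
definition cond_on_terminal :: "real \<Rightarrow> (real \<Rightarrow> 'a::euclidean_space) measure
      \<Rightarrow> ('a \<Rightarrow> (real \<Rightarrow> 'a) measure) \<Rightarrow> bool" where
  "cond_on_terminal T M K \<longleftrightarrow>
     K \<in> measurable borel (prob_algebra (path_space T)) \<and>
     (\<forall>A \<in> sets (path_space T). \<forall>B \<in> sets (borel :: 'a measure).
        emeasure M (A \<inter> {\<omega> \<in> space M. \<omega> T \<in> B})
          = (\<integral>\<^sup>+ x \<in> B. emeasure (K x) A \<partial>terminal_law T M))"

end

theory Submission
  imports Defs
begin

(* Disintegrating Q along Z_T shows that Q^{Pi*} is Q reweighted by pi*(Z_T), so it suffices that
  reweighting a Markov path measure by a positive integrable function h(Z_T) of the terminal value
  preserves the Markov property (the converse then follows by reweighting with 1/h(Z_T)).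
  By the Bayes formula, E'[f(Z_t) | F_s] = E[f(Z_t) h(Z_T) | F_s] / E[h(Z_T) | F_s].
  By the Markov property, extended from bounded to integrable functions by truncation,
  E[h(Z_T) | F_t] is a function of Z_t; hence, by the tower property, numerator and
  denominator only depend on Z_s. *)

lemma integrable_bounded_mult:
  fixes g Y :: "'b \<Rightarrow> real"
  assumes "integrable M Y" "g \<in> borel_measurable M" "\<And>x. \<bar>g x\<bar> \<le> C"
  shows "integrable M (\<lambda>x. g x * Y x)"
proof (rule Bochner_Integration.integrable_bound[OF integrable_mult_right[OF integrable_abs[OF assms(1)], of C]])
  have "0 \<le> C" using assms(3)[of undefined] by linarith
  then show "AE x in M. norm (g x * Y x) \<le> norm (C * \<bar>Y x\<bar>)"
    using assms(3) by (auto simp: abs_mult intro!: mult_right_mono)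
qed (use assms in auto)

lemma
  fixes f :: "'b \<Rightarrow> real"
  assumes f: "integrable M f" "\<And>x. 0 \<le> f x"
  shows integrable_min_nat: "integrable M (\<lambda>x. min (f x) (real n))"
    and tendsto_integral_min_nat: "(\<lambda>n. \<integral>x. min (f x) (real n) \<partial>M) \<longlonglongrightarrow> (\<integral>x. f x \<partial>M)"
proof -
  have le: "\<bar>min (f x) (real n)\<bar> \<le> f x" for x n using f(2)[of x] by auto
  have [measurable]: "f \<in> borel_measurable M" using f(1) by blast
  show "integrable M (\<lambda>x. min (f x) (real n))"
    by (rule Bochner_Integration.integrable_bound[OF f(1)]) (use le f(2) in auto)
  show "(\<lambda>n. \<integral>x. min (f x) (real n) \<partial>M) \<longlonglongrightarrow> (\<integral>x. f x \<partial>M)"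
  proof (rule integral_dominated_convergence[where w = f])
    show "AE x in M. (\<lambda>n. min (f x) (real n)) \<longlonglongrightarrow> f x"
    proof (intro AE_I2 tendsto_eventually)
      fix x
      obtain N :: nat where "f x \<le> N" using real_arch_simple by blast
      then show "\<forall>\<^sub>F n in sequentially. min (f x) (real n) = f x"
        unfolding eventually_sequentially by (intro exI[of _ N]) auto
    qed
  qed (use f(1) le in auto)
qed

lemma finite_measure_density_integrable:
  assumes "integrable M D" "\<And>x. 0 \<le> D x"
  shows "finite_measure (density M (\<lambda>x. ennreal (D x)))"
proof (rule finite_measureI)
  have "D \<in> borel_measurable M" using assms(1) by blast
  then have "emeasure (density M (\<lambda>x. ennreal (D x))) (space M) = (\<integral>\<^sup>+x. ennreal (D x) \<partial>M)"
    by (simp add: emeasure_density nn_integral_set_ennreal[symmetric])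
  also have "\<dots> \<noteq> \<infinity>" using integrableD(2)[OF assms(1)] assms(2) by simp
  finally show "emeasure (density M (\<lambda>x. ennreal (D x))) (space (density M (\<lambda>x. ennreal (D x)))) \<noteq> \<infinity>"
    by simp
qed

lemma (in finite_measure) sigma_finite_subalgebra_of_subalgebra:
  "subalgebra M F \<Longrightarrow> sigma_finite_subalgebra M F"
  by (intro finite_measure_subalgebra_is_sigma_finite)
    (simp add: finite_measure_subalgebra_def finite_measure_subalgebra_axioms_def finite_measure_axioms)

lemma borel_measurable_vimage_algebra_factor:
  fixes Z :: "'b \<Rightarrow> 'c" and W :: "'b \<Rightarrow> real"
  assumes W: "W \<in> borel_measurable (vimage_algebra X Z N)" and Z: "Z \<in> X \<rightarrow> space N"
  obtains \<phi> where "\<phi> \<in> borel_measurable N" "\<And>x. x \<in> X \<Longrightarrow> W x = \<phi> (Z x)"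
proof -
  have "\<exists>B. B \<in> sets N \<and> {x\<in>X. W x < q} = Z -` B \<inter> X" for q :: real
  proof -
    have "W -` {..<q} \<inter> space (vimage_algebra X Z N) \<in> sets (vimage_algebra X Z N)"
      by (rule measurable_sets[OF W]) auto
    then show ?thesis by (simp add: sets_vimage_algebra2[OF Z] vimage_def Int_def conj_commute)
  qed
  then obtain B where B: "\<And>q. B q \<in> sets N" "\<And>q. {x\<in>X. W x < q} = Z -` B q \<inter> X" by metis
  define \<phi> where "\<phi> y = real_of_ereal (INF q\<in>\<rat>. if y \<in> B q then ereal q else \<infinity>)" for y
  have "(\<lambda>y. INF q\<in>\<rat>. if y \<in> B q then ereal q else \<infinity>) \<in> borel_measurable N"
    using B(1) by (intro borel_measurable_INF[OF countable_rat] measurable_If_set) auto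
  then have "\<phi> \<in> borel_measurable N" unfolding \<phi>_def by (rule borel_measurable_real_of_ereal)
  moreover have "W x = \<phi> (Z x)" if x: "x \<in> X" for x
  proof -
    have mem: "Z x \<in> B q \<longleftrightarrow> W x < q" for q using B(2)[of q] x by blast
    have "(INF q\<in>\<rat>. if Z x \<in> B q then ereal q else \<infinity>) = ereal (W x)"
    proof (rule antisym)
      show "ereal (W x) \<le> (INF q\<in>\<rat>. if Z x \<in> B q then ereal q else \<infinity>)"
        by (rule INF_greatest) (auto simp: mem)
      show "(INF q\<in>\<rat>. if Z x \<in> B q then ereal q else \<infinity>) \<le> ereal (W x)"
      proof (rule dense_ge)
        fix e assume "ereal (W x) < e"
        then obtain r where r: "W x < r" "ereal r < e" using ereal_dense2 by force
        then obtain q where q: "q \<in> \<rat>" "W x < q" "q < r" using Rats_dense_in_real by blast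
        have "(INF q\<in>\<rat>. if Z x \<in> B q then ereal q else \<infinity>) \<le> ereal q"
          using INF_lower[OF q(1), of "\<lambda>q. if Z x \<in> B q then ereal q else \<infinity>"] mem q by simp
        also have "\<dots> \<le> e" using q r by (metis ereal_less_eq(3) less_imp_le order.strict_trans1)
        finally show "(INF q\<in>\<rat>. if Z x \<in> B q then ereal q else \<infinity>) \<le> e" .
      qed
    qed
    then show ?thesis by (simp add: \<phi>_def)
  qed
  ultimately show ?thesis using that by blast
qed

context sigma_finite_subalgebra
begin

lemma real_cond_exp_coarsen:
  assumes H: "subalgebra M H" "subalgebra H F"
    and f: "integrable M f" and g: "g \<in> borel_measurable F" "integrable M g"
    and fg: "AE x in M. real_cond_exp M H f x = g x"
  shows "AE x in M. real_cond_exp M F f x = g x"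
proof -
  interpret H: sigma_finite_subalgebra M H by (rule nested_subalg_is_sigma_finite[OF H])
  have "AE x in M. real_cond_exp M F (real_cond_exp M H f) x = real_cond_exp M F g x"
    by (rule real_cond_exp_cong[OF fg]) (use g in auto)
  then show ?thesis
    using real_cond_exp_nested_subalg[OF H f] real_cond_exp_F_meas[OF g(2,1)] by auto
qed

lemma real_cond_exp_eq_of_truncations:
  assumes H: "subalgebra M H" "subalgebra H F"
    and f: "integrable M f" "\<And>x. 0 \<le> f x"
    and trunc: "\<And>n::nat. AE x in M. real_cond_exp M H (\<lambda>x. min (f x) n) x
                                   = real_cond_exp M F (\<lambda>x. min (f x) n) x"
  shows "AE x in M. real_cond_exp M H f x = real_cond_exp M F f x"
proof -
  interpret H: sigma_finite_subalgebra M H by (rule nested_subalg_is_sigma_finite[OF H])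
  let ?f = "\<lambda>n x. min (f x) (real n)"
  let ?d = "\<lambda>x. \<bar>real_cond_exp M H f x - real_cond_exp M F f x\<bar>"
  have fn_int: "integrable M (?f n)" for n by (rule integrable_min_nat[OF f])
  have d_int: "integrable M ?d" using f(1) by (intro integrable_abs Bochner_Integration.integrable_diff) auto
  \<comment> \<open>both conditional expectations of f dominate the common one of its truncation\<close>
  have bound: "(\<integral>x. ?d x \<partial>M) \<le> 2 * ((\<integral>x. f x \<partial>M) - (\<integral>x. ?f n x \<partial>M))" for n
  proof -
    have le: "AE x in M. ?f n x \<le> f x" by simp
    have "AE x in M. ?d x \<le> (real_cond_exp M H f x - real_cond_exp M H (?f n) x)
                             + (real_cond_exp M F f x - real_cond_exp M F (?f n) x)"
      using H.real_cond_exp_mono[OF le fn_int f(1)] real_cond_exp_mono[OF le fn_int f(1)] trunc[of n]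
      by auto
    then have "(\<integral>x. ?d x \<partial>M) \<le> (\<integral>x. (real_cond_exp M H f x - real_cond_exp M H (?f n) x)
                             + (real_cond_exp M F f x - real_cond_exp M F (?f n) x) \<partial>M)"
      using f(1) fn_int
      by (intro integral_mono_AE d_int)
        (auto intro!: Bochner_Integration.integrable_add Bochner_Integration.integrable_diff
          real_cond_exp_int H.real_cond_exp_int)
    then show ?thesis
      using H.real_cond_exp_int[OF f(1)] real_cond_exp_int[OF f(1)]
        H.real_cond_exp_int[OF fn_int] real_cond_exp_int[OF fn_int] f(1) fn_int by simp
  qed
  have "(\<lambda>n. 2 * ((\<integral>x. f x \<partial>M) - (\<integral>x. ?f n x \<partial>M)))
          \<longlonglongrightarrow> 2 * ((\<integral>x. f x \<partial>M) - (\<integral>x. f x \<partial>M))"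
    using tendsto_integral_min_nat[OF f] by (intro tendsto_intros)
  then have "(\<integral>x. ?d x \<partial>M) \<le> 0" using bound by (intro LIMSEQ_le_const) auto
  then have "(\<integral>x. ?d x \<partial>M) = 0" by (simp add: antisym)
  then have "AE x in M. ?d x = 0" using d_int by (subst (asm) integral_nonneg_eq_0_iff_AE) auto
  then show ?thesis by auto
qed

lemma real_cond_exp_bounded_ratio:
  assumes D: "integrable M D" "\<And>x. 0 < D x"
    and [measurable]: "X \<in> borel_measurable M" and X: "\<And>x. \<bar>X x\<bar> \<le> C"
  obtains Y where "Y \<in> borel_measurable F" "\<And>x. \<bar>Y x\<bar> \<le> C"
    "AE x in M. real_cond_exp M F (\<lambda>x. X x * D x) x = Y x * real_cond_exp M F D x"
proof -
  have C: "0 \<le> C" using X[of undefined] by auto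
  have D0: "0 \<le> D x" for x using D(2)[of x] by simp
  have XD: "integrable M (\<lambda>x. X x * D x)" by (rule integrable_bounded_mult[OF D(1) _ X]) simp
  let ?a = "real_cond_exp M F D" and ?b = "real_cond_exp M F (\<lambda>x. X x * D x)"
  define Y where "Y x = max (- C) (min C (?b x / ?a x))" for x
  have a_pos: "AE x in M. 0 < ?a x" by (rule real_cond_exp_gr_c[OF D(1)]) (use D(2) in auto)
  have XD_bounds: "- C * D x \<le> X x * D x" "X x * D x \<le> C * D x" for x
    using mult_right_mono[of "- C" "X x" "D x"] mult_right_mono[of "X x" C "D x"] X[of x] D0[of x]
    by (auto simp: abs_le_iff)
  have "AE x in M. ?b x \<le> real_cond_exp M F (\<lambda>x. C * D x) x"
    using XD_bounds D(1) by (intro real_cond_exp_mono[OF _ XD] AE_I2) auto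
  then have upper: "AE x in M. ?b x \<le> C * ?a x"
    using real_cond_exp_cmult[OF D(1), of C] by auto
  have "AE x in M. real_cond_exp M F (\<lambda>x. - C * D x) x \<le> ?b x"
    using XD_bounds D(1) by (intro real_cond_exp_mono[OF _ _ XD] AE_I2) auto
  then have lower: "AE x in M. - C * ?a x \<le> ?b x"
    using real_cond_exp_cmult[OF D(1), of "- C"] by auto
  show ?thesis
  proof
    show "Y \<in> borel_measurable F" unfolding Y_def by measurable
    show "\<bar>Y x\<bar> \<le> C" for x using C by (auto simp: Y_def)
    show "AE x in M. ?b x = Y x * ?a x"
      using a_pos upper lower
      by eventually_elim (auto simp: Y_def pos_divide_le_eq pos_le_divide_eq)
  qed
qed

lemma real_cond_exp_density_Bayes:
  assumes D: "integrable M D" "\<And>x. 0 \<le> D x"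
    and X_meas[measurable]: "X \<in> borel_measurable M" and X: "\<And>x. \<bar>X x\<bar> \<le> C"
    and Y_meas[measurable]: "Y \<in> borel_measurable F" and Y: "\<And>x. \<bar>Y x\<bar> \<le> C"
    and ratio: "AE x in M. real_cond_exp M F (\<lambda>x. X x * D x) x = Y x * real_cond_exp M F D x"
  defines "M' \<equiv> density M (\<lambda>x. ennreal (D x))"
  shows "AE x in M'. real_cond_exp M' F X x = Y x"
proof -
  have [measurable]: "D \<in> borel_measurable M" using D(1) by blast
  have sets_M': "sets M' = sets M" by (simp add: M'_def)
  interpret M': finite_measure M' unfolding M'_def by (rule finite_measure_density_integrable[OF D])
  interpret M'F: sigma_finite_subalgebra M' F
    using subalg by (intro M'.sigma_finite_subalgebra_of_subalgebra) (simp add: subalgebra_def M'_def)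
  have Y_M[measurable]: "Y \<in> borel_measurable M" by (rule measurable_from_subalg[OF subalg]) simp
  have bounded_int: "integrable M' Z" if "Z \<in> borel_measurable M" "\<And>x. \<bar>Z x\<bar> \<le> C" for Z
    using that by (intro M'.integrable_const_bound[of _ C]) (auto simp: measurable_cong_sets[OF sets_M' refl])
  have X_int: "integrable M' X" and Y_int: "integrable M' Y"
    using bounded_int[OF X_meas X] bounded_int[OF Y_M Y] .
  show ?thesis
  proof (rule M'F.real_cond_exp_charact)
    fix A assume A: "A \<in> sets F"
    then have [measurable]: "A \<in> sets M" using subalg by (auto simp: subalgebra_def)
    have A_F: "indicator A \<in> borel_measurable F" using A by simp
    have int_M': "(\<integral>x\<in>A. Z x \<partial>M') = (\<integral>x. indicator A x * (Z x * D x) \<partial>M)"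
      if "Z \<in> borel_measurable M" for Z
      using that D(2) by (simp add: M'_def set_lebesgue_integral_def integral_density ac_simps)
    have "(\<integral>x\<in>A. X x \<partial>M') = (\<integral>x. indicator A x * real_cond_exp M F (\<lambda>x. X x * D x) x \<partial>M)"
      unfolding int_M'[OF X_meas] using integrable_mult_indicator[OF _ integrable_bounded_mult[OF D(1) X_meas X]]
      by (intro real_cond_exp_intg(2)[symmetric]) (auto simp: A_F)
    also have "\<dots> = (\<integral>x. indicator A x * Y x * real_cond_exp M F D x \<partial>M)"
      using ratio by (intro integral_cong_AE) auto
    also have "\<dots> = (\<integral>x. indicator A x * Y x * D x \<partial>M)"
      using integrable_mult_indicator[OF _ integrable_bounded_mult[OF D(1) Y_M Y]]
      by (intro real_cond_exp_intg(2) borel_measurable_times A_F) (auto simp: ac_simps)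
    also have "\<dots> = (\<integral>x\<in>A. Y x \<partial>M')" using int_M'[OF Y_M] by (simp add: ac_simps)
    finally show "(\<integral>x\<in>A. X x \<partial>M') = (\<integral>x\<in>A. Y x \<partial>M')" .
  qed (use X_int Y_int in auto)
qed

lemma real_cond_exp_density_eq:
  assumes H: "subalgebra M H" "subalgebra H F"
    and D: "integrable M D" "\<And>x. 0 < D x"
    and X_meas: "X \<in> borel_measurable M" and X: "\<And>x. \<bar>X x\<bar> \<le> C"
    and eq_D: "AE x in M. real_cond_exp M H D x = real_cond_exp M F D x"
    and eq_XD: "AE x in M. real_cond_exp M H (\<lambda>x. X x * D x) x
                          = real_cond_exp M F (\<lambda>x. X x * D x) x"
  defines "M' \<equiv> density M (\<lambda>x. ennreal (D x))"
  shows "AE x in M'. real_cond_exp M' H X x = real_cond_exp M' F X x"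
proof -
  interpret H: sigma_finite_subalgebra M H by (rule nested_subalg_is_sigma_finite[OF H])
  have D0: "0 \<le> D x" for x using D(2)[of x] by simp
  obtain Y where Y_meas: "Y \<in> borel_measurable F" and Y: "\<And>x. \<bar>Y x\<bar> \<le> C"
    and ratio: "AE x in M. real_cond_exp M F (\<lambda>x. X x * D x) x = Y x * real_cond_exp M F D x"
    using real_cond_exp_bounded_ratio[OF D X_meas X] by blast
  have "AE x in M. real_cond_exp M H (\<lambda>x. X x * D x) x = Y x * real_cond_exp M H D x"
    using ratio eq_D eq_XD by auto
  then have "AE x in M'. real_cond_exp M' H X x = Y x"
    unfolding M'_def
    by (rule H.real_cond_exp_density_Bayes[OF D(1) D0 X_meas X measurable_from_subalg[OF H(2) Y_meas] Y])
  moreover have "AE x in M'. real_cond_exp M' F X x = Y x"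
    unfolding M'_def by (rule real_cond_exp_density_Bayes[OF D(1) D0 X_meas X Y_meas Y ratio])
  ultimately show ?thesis by auto
qed

end

lemma space_past_alg: "space (past_alg T s) = space (path_space T)"
  unfolding past_alg_def by (rule space_measure_of) blast

lemma sets_past_alg: "sets (past_alg T s) = sigma_sets (space (path_space T))
     {(\<lambda>\<omega>. \<omega> r) -` B \<inter> space (path_space T) | r B. r \<in> {0..s} \<and> B \<in> sets (borel :: 'a::euclidean_space measure)}"
  unfolding past_alg_def by (rule sets_measure_of) blast

lemma subalgebra_past_alg_mono:
  assumes "s \<le> t"
  shows "subalgebra (past_alg T t) (past_alg T s :: (real \<Rightarrow> 'a::euclidean_space) measure)"
  unfolding subalgebra_def sets_past_alg space_past_alg
  using assms by (auto 0 4 intro!: sigma_sets_mono' intro: order.trans)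

lemma sets_present_alg: "sets (present_alg T s) =
    {(\<lambda>\<omega>. \<omega> s) -` B \<inter> space (path_space T) | B. B \<in> sets (borel :: 'a::euclidean_space measure)}"
  unfolding present_alg_def by (rule sets_vimage_algebra2) auto

lemma subalgebra_past_present:
  assumes "0 \<le> s"
  shows "subalgebra (past_alg T s) (present_alg T s :: (real \<Rightarrow> 'a::euclidean_space) measure)"
  unfolding subalgebra_def sets_past_alg sets_present_alg
  using assms by (auto simp: space_past_alg present_alg_def intro: sigma_sets.Basic)

lemma measurable_present_alg:
  "g \<in> borel_measurable borel \<Longrightarrow> (\<lambda>\<omega>. g (\<omega> t)) \<in> borel_measurable (present_alg T t)"
  unfolding present_alg_def by (rule measurable_compose[OF measurable_vimage_algebra1]) auto

locale path_measure = finite_measure M for M :: "(real \<Rightarrow> 'a::euclidean_space) measure" +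
  fixes T :: real
  assumes sets_eq_path_space: "sets M = sets (path_space T)" and horizon_nonneg: "0 \<le> T"
begin

lemma space_eq_path_space: "space M = space (path_space T)"
  using sets_eq_path_space by (rule sets_eq_imp_space_eq)

lemma measurable_coordinate: "t \<in> {0..T} \<Longrightarrow> (\<lambda>\<omega>. \<omega> t) \<in> measurable M borel"
  unfolding measurable_cong_sets[OF sets_eq_path_space refl] path_space_def
  by (rule measurable_component_singleton)

lemma measurable_terminal[measurable]: "(\<lambda>\<omega>. \<omega> T) \<in> measurable M borel"
  using horizon_nonneg by (intro measurable_coordinate) simp

lemma subalgebra_present_alg:
  assumes "t \<in> {0..T}"
  shows "subalgebra M (present_alg T t)"
  unfolding subalgebra_def sets_present_alg
  using measurable_sets[OF measurable_coordinate[OF assms]]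
  by (auto simp: present_alg_def space_eq_path_space)

lemma subalgebra_past_alg:
  assumes "t \<le> T"
  shows "subalgebra M (past_alg T t)"
proof -
  have "sets (past_alg T t) \<subseteq> sets M"
    unfolding sets_past_alg space_eq_path_space[symmetric]
    by (rule sets.sigma_sets_subset)
      (use measurable_sets[OF measurable_coordinate] assms in \<open>auto simp: space_eq_path_space\<close>)
  then show ?thesis by (simp add: subalgebra_def space_past_alg space_eq_path_space)
qed

lemma sigma_finite_subalgebra_present_alg:
  "t \<in> {0..T} \<Longrightarrow> sigma_finite_subalgebra M (present_alg T t)"
  by (intro sigma_finite_subalgebra_of_subalgebra subalgebra_present_alg)

lemma markov_path_cond_exp_nonneg:
  assumes "markov_path T M" "0 \<le> s" "s \<le> t" "t \<le> T"
    and g: "g \<in> borel_measurable borel" "\<And>x. 0 \<le> g x" and g_int: "integrable M (\<lambda>\<omega>. g (\<omega> t))"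
  shows "AE \<omega> in M. real_cond_exp M (past_alg T s) (\<lambda>\<omega>. g (\<omega> t)) \<omega>
                  = real_cond_exp M (present_alg T s) (\<lambda>\<omega>. g (\<omega> t)) \<omega>"
proof -
  interpret sigma_finite_subalgebra M "present_alg T s"
    using assms by (intro sigma_finite_subalgebra_present_alg) auto
  show ?thesis
  proof (rule real_cond_exp_eq_of_truncations[OF subalgebra_past_alg subalgebra_past_present g_int])
    fix n :: nat
    have "bounded (range (\<lambda>x. min (g x) (real n)))"
      unfolding bounded_iff using g(2) by (intro exI[of _ "real n"]) auto
    moreover have "(\<lambda>x. min (g x) (real n)) \<in> borel_measurable borel" using g(1) by measurable
    ultimately show "AE \<omega> in M. real_cond_exp M (past_alg T s) (\<lambda>\<omega>. min (g (\<omega> t)) (real n)) \<omega>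
                        = real_cond_exp M (present_alg T s) (\<lambda>\<omega>. min (g (\<omega> t)) (real n)) \<omega>"
      using assms(1-4) unfolding markov_path_def by blast
  qed (use assms in auto)
qed

lemma markov_path_cond_exp:
  assumes markov: "markov_path T M" and st: "0 \<le> s" "s \<le> t" "t \<le> T"
    and g: "g \<in> borel_measurable borel" and g_int: "integrable M (\<lambda>\<omega>. g (\<omega> t))"
  shows "AE \<omega> in M. real_cond_exp M (past_alg T s) (\<lambda>\<omega>. g (\<omega> t)) \<omega>
                  = real_cond_exp M (present_alg T s) (\<lambda>\<omega>. g (\<omega> t)) \<omega>"
proof -
  interpret G: sigma_finite_subalgebra M "present_alg T s"
    using st by (intro sigma_finite_subalgebra_present_alg) auto
  interpret H: sigma_finite_subalgebra M "past_alg T s"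
    using st by (intro G.nested_subalg_is_sigma_finite subalgebra_past_alg subalgebra_past_present) auto
  define g\<^sub>p where "g\<^sub>p x = max (g x) 0" for x
  define g\<^sub>n where "g\<^sub>n x = max (- g x) 0" for x
  have g_split: "(\<lambda>\<omega>. g (\<omega> t)) = (\<lambda>\<omega>. g\<^sub>p (\<omega> t) - g\<^sub>n (\<omega> t))"
    by (auto simp: g\<^sub>p_def g\<^sub>n_def max_def)
  have [measurable]: "g\<^sub>p \<in> borel_measurable borel" "g\<^sub>n \<in> borel_measurable borel"
    unfolding g\<^sub>p_def g\<^sub>n_def using g by measurable
  have int: "integrable M (\<lambda>\<omega>. g\<^sub>p (\<omega> t))" "integrable M (\<lambda>\<omega>. g\<^sub>n (\<omega> t))"
    unfolding g\<^sub>p_def g\<^sub>n_def using g_int by (auto intro!: Bochner_Integration.integrable_max)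
  have "AE \<omega> in M. real_cond_exp M (past_alg T s) (\<lambda>\<omega>. g\<^sub>p (\<omega> t)) \<omega>
                  = real_cond_exp M (present_alg T s) (\<lambda>\<omega>. g\<^sub>p (\<omega> t)) \<omega>"
       "AE \<omega> in M. real_cond_exp M (past_alg T s) (\<lambda>\<omega>. g\<^sub>n (\<omega> t)) \<omega>
                  = real_cond_exp M (present_alg T s) (\<lambda>\<omega>. g\<^sub>n (\<omega> t)) \<omega>"
    using int by (auto intro!: markov_path_cond_exp_nonneg[OF markov st]) (auto simp: g\<^sub>p_def g\<^sub>n_def)
  then show ?thesis
    unfolding g_split using H.real_cond_exp_diff[OF int] G.real_cond_exp_diff[OF int] by auto
qed

lemma markov_path_cond_exp_past_terminal_weight:
  assumes markov: "markov_path T M" and t: "0 \<le> t" "t \<le> T"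
    and f: "f \<in> borel_measurable borel" "\<And>x. \<bar>f x\<bar> \<le> C"
    and h: "h \<in> borel_measurable borel" and h_int: "integrable M (\<lambda>\<omega>. h (\<omega> T))"
  obtains \<psi> where "\<psi> \<in> borel_measurable borel" "integrable M (\<lambda>\<omega>. \<psi> (\<omega> t))"
    "AE \<omega> in M. real_cond_exp M (past_alg T t) (\<lambda>\<omega>. f (\<omega> t) * h (\<omega> T)) \<omega> = \<psi> (\<omega> t)"
proof -
  interpret G: sigma_finite_subalgebra M "present_alg T t"
    using t by (intro sigma_finite_subalgebra_present_alg) auto
  interpret H: sigma_finite_subalgebra M "past_alg T t"
    using t by (intro G.nested_subalg_is_sigma_finite subalgebra_past_alg subalgebra_past_present)
  have [measurable]: "(\<lambda>\<omega>. \<omega> t) \<in> measurable M borel"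
    using t by (intro measurable_coordinate) simp
  note f(1)[measurable] h[measurable]
  let ?E = "real_cond_exp M (present_alg T t) (\<lambda>\<omega>. h (\<omega> T))"
  have "?E \<in> borel_measurable (vimage_algebra (space (path_space T)) (\<lambda>\<omega>. \<omega> t) borel)"
    using borel_measurable_cond_exp[of M "present_alg T t"] unfolding present_alg_def .
  then obtain \<phi> where [measurable]: "\<phi> \<in> borel_measurable borel"
    and \<phi>: "\<And>\<omega>. \<omega> \<in> space M \<Longrightarrow> ?E \<omega> = \<phi> (\<omega> t)"
    by (rule borel_measurable_vimage_algebra_factor) (auto simp: space_eq_path_space)
  show ?thesis
  proof
    show "(\<lambda>x. f x * \<phi> x) \<in> borel_measurable borel" by measurable
    have "integrable M (\<lambda>\<omega>. f (\<omega> t) * ?E \<omega>)"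
      by (rule integrable_bounded_mult[OF G.real_cond_exp_int(1)[OF h_int] _ f(2)]) simp
    moreover have "integrable M (\<lambda>\<omega>. f (\<omega> t) * \<phi> (\<omega> t)) \<longleftrightarrow> integrable M (\<lambda>\<omega>. f (\<omega> t) * ?E \<omega>)"
      by (intro Bochner_Integration.integrable_cong) (auto simp: \<phi>)
    ultimately show "integrable M (\<lambda>\<omega>. f (\<omega> t) * \<phi> (\<omega> t))" by simp
    have "AE \<omega> in M. real_cond_exp M (past_alg T t) (\<lambda>\<omega>. f (\<omega> t) * h (\<omega> T)) \<omega>
                   = f (\<omega> t) * real_cond_exp M (past_alg T t) (\<lambda>\<omega>. h (\<omega> T)) \<omega>"
      using t measurable_from_subalg[OF subalgebra_past_present measurable_present_alg[OF f(1)]]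
      by (intro H.real_cond_exp_mult integrable_bounded_mult[OF h_int _ f(2)]) auto
    moreover have "AE \<omega> in M. real_cond_exp M (past_alg T t) (\<lambda>\<omega>. h (\<omega> T)) \<omega> = ?E \<omega>"
      using markov_path_cond_exp[OF markov t order_refl h h_int] .
    ultimately show "AE \<omega> in M. real_cond_exp M (past_alg T t) (\<lambda>\<omega>. f (\<omega> t) * h (\<omega> T)) \<omega>
                              = f (\<omega> t) * \<phi> (\<omega> t)"
      using AE_space by eventually_elim (simp add: \<phi>)
  qed
qed

lemma markov_path_cond_exp_terminal_weight:
  assumes markov: "markov_path T M" and st: "0 \<le> s" "s \<le> t" "t \<le> T"
    and f: "f \<in> borel_measurable borel" "\<And>x. \<bar>f x\<bar> \<le> C"
    and h: "h \<in> borel_measurable borel" and h_int: "integrable M (\<lambda>\<omega>. h (\<omega> T))"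
  shows "AE \<omega> in M. real_cond_exp M (past_alg T s) (\<lambda>\<omega>. f (\<omega> t) * h (\<omega> T)) \<omega>
                  = real_cond_exp M (present_alg T s) (\<lambda>\<omega>. f (\<omega> t) * h (\<omega> T)) \<omega>"
proof -
  interpret G: sigma_finite_subalgebra M "present_alg T s"
    using st by (intro sigma_finite_subalgebra_present_alg) auto
  interpret H: sigma_finite_subalgebra M "past_alg T s"
    using st by (intro G.nested_subalg_is_sigma_finite subalgebra_past_alg subalgebra_past_present) auto
  let ?X = "\<lambda>\<omega>. f (\<omega> t) * h (\<omega> T)"
  have [measurable]: "(\<lambda>\<omega>. \<omega> t) \<in> measurable M borel"
    using st by (intro measurable_coordinate) simp
  have X_int: "integrable M ?X" by (rule integrable_bounded_mult[OF h_int _ f(2)]) (use f(1) in simp)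
  obtain \<psi> where \<psi>_meas[measurable]: "\<psi> \<in> borel_measurable borel"
    and \<psi>_int: "integrable M (\<lambda>\<omega>. \<psi> (\<omega> t))"
    and past_t: "AE \<omega> in M. real_cond_exp M (past_alg T t) ?X \<omega> = \<psi> (\<omega> t)"
    using markov_path_cond_exp_past_terminal_weight[OF markov _ st(3) f h h_int] st by auto
  have "AE \<omega> in M. real_cond_exp M (past_alg T s) (real_cond_exp M (past_alg T t) ?X) \<omega>
                 = real_cond_exp M (past_alg T s) (\<lambda>\<omega>. \<psi> (\<omega> t)) \<omega>"
    using past_t by (rule H.real_cond_exp_cong) auto
  then have "AE \<omega> in M. real_cond_exp M (past_alg T s) ?X \<omega>
                 = real_cond_exp M (present_alg T s) (\<lambda>\<omega>. \<psi> (\<omega> t)) \<omega>"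
    using H.real_cond_exp_nested_subalg[OF subalgebra_past_alg[OF st(3)] subalgebra_past_alg_mono[OF st(2)] X_int]
      markov_path_cond_exp[OF markov st \<psi>_meas \<psi>_int] by auto
  moreover from this have "AE \<omega> in M. real_cond_exp M (present_alg T s) ?X \<omega>
                 = real_cond_exp M (present_alg T s) (\<lambda>\<omega>. \<psi> (\<omega> t)) \<omega>"
    using st by (intro G.real_cond_exp_coarsen[OF subalgebra_past_alg subalgebra_past_present X_int]
        G.real_cond_exp_int(1)[OF \<psi>_int]) auto
  ultimately show ?thesis by auto
qed

lemma path_measure_density:
  assumes "integrable M (\<lambda>\<omega>. h (\<omega> T))" "\<And>z. 0 \<le> h z"
  shows "path_measure (density M (\<lambda>\<omega>. ennreal (h (\<omega> T)))) T"
  using finite_measure_density_integrable[OF assms] sets_eq_path_space horizon_nonneg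
  by (simp add: path_measure_def path_measure_axioms_def)

lemma markov_path_density:
  assumes markov: "markov_path T M"
    and h: "h \<in> borel_measurable borel" "\<And>z. 0 < h z" and h_int: "integrable M (\<lambda>\<omega>. h (\<omega> T))"
  shows "markov_path T (density M (\<lambda>\<omega>. ennreal (h (\<omega> T))))"
  unfolding markov_path_def
proof (intro allI impI)
  fix s t and f :: "'a \<Rightarrow> real"
  assume st: "0 \<le> s" "s \<le> t" "t \<le> T" and [measurable]: "f \<in> borel_measurable borel"
    and "bounded (range f)"
  then obtain C where C: "\<And>x. \<bar>f x\<bar> \<le> C" unfolding bounded_iff by auto
  interpret G: sigma_finite_subalgebra M "present_alg T s"
    using st by (intro sigma_finite_subalgebra_present_alg) auto
  have [measurable]: "(\<lambda>\<omega>. \<omega> t) \<in> measurable M borel"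
    using st by (intro measurable_coordinate) simp
  show "AE \<omega> in density M (\<lambda>\<omega>. ennreal (h (\<omega> T))).
          real_cond_exp (density M (\<lambda>\<omega>. ennreal (h (\<omega> T)))) (past_alg T s) (\<lambda>\<omega>. f (\<omega> t)) \<omega>
        = real_cond_exp (density M (\<lambda>\<omega>. ennreal (h (\<omega> T)))) (present_alg T s) (\<lambda>\<omega>. f (\<omega> t)) \<omega>"
    using st h(2) C
    by (intro G.real_cond_exp_density_eq[OF subalgebra_past_alg subalgebra_past_present h_int]
        markov_path_cond_exp[OF markov _ _ order_refl h(1) h_int]
        markov_path_cond_exp_terminal_weight[OF markov _ _ _ _ C h(1) h_int]) auto
qed

lemma markov_path_density_iff:
  assumes h: "h \<in> borel_measurable borel" "\<And>z. 0 < h z" and h_int: "integrable M (\<lambda>\<omega>. h (\<omega> T))"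
  shows "markov_path T (density M (\<lambda>\<omega>. ennreal (h (\<omega> T)))) \<longleftrightarrow> markov_path T M"
proof
  let ?M' = "density M (\<lambda>\<omega>. ennreal (h (\<omega> T)))"
  assume markov': "markov_path T ?M'"
  interpret M': path_measure ?M' T
    using h(2) by (intro path_measure_density[OF h_int]) (auto intro: less_imp_le)
  have [measurable]: "h \<in> borel_measurable borel" by (fact h(1))
  have inv_h: "ennreal (h z) * ennreal (1 / h z) = 1" for z
    using h(2)[of z] by (simp add: ennreal_mult[symmetric])
  have "integrable ?M' (\<lambda>\<omega>. 1 / h (\<omega> T))"
    using h(2) by (subst integrable_density) (auto intro: less_imp_le simp: less_imp_neq[symmetric])
  then have "markov_path T (density ?M' (\<lambda>\<omega>. ennreal (1 / h (\<omega> T))))"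
    using h(2) by (intro M'.markov_path_density[OF markov']) auto
  moreover have "density ?M' (\<lambda>\<omega>. ennreal (1 / h (\<omega> T))) = M"
    by (simp add: density_density_eq inv_h density_1)
  ultimately show "markov_path T M" by simp
next
  assume "markov_path T M"
  then show "markov_path T (density M (\<lambda>\<omega>. ennreal (h (\<omega> T))))"
    by (rule markov_path_density[OF _ h h_int])
qed

lemma integrable_terminal_density:
  assumes [measurable]: "p \<in> borel_measurable borel" and p: "\<And>z. 0 \<le> p z"
    and prob: "prob_space (density (terminal_law T M) (\<lambda>z. ennreal (p z)))"
  shows "integrable M (\<lambda>\<omega>. p (\<omega> T))"
proof (rule integrableI_nonneg)
  have "(\<integral>\<^sup>+\<omega>. ennreal (p (\<omega> T)) \<partial>M) = (\<integral>\<^sup>+z. ennreal (p z) \<partial>terminal_law T M)"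
    unfolding terminal_law_def by (rule nn_integral_distr[symmetric]) auto
  also have "\<dots> = emeasure (density (terminal_law T M) (\<lambda>z. ennreal (p z))) UNIV"
    by (simp add: emeasure_density terminal_law_def)
  also have "\<dots> = 1"
    using prob_space.emeasure_space_1[OF prob] by (simp add: terminal_law_def)
  finally show "(\<integral>\<^sup>+\<omega>. ennreal (p (\<omega> T)) \<partial>M) < \<infinity>" by simp
qed (use p in auto)

lemma measurable_cond_on_terminal_emeasure:
  assumes "cond_on_terminal T M K" "A \<in> sets M"
  shows "(\<lambda>x. emeasure (K x) A) \<in> borel_measurable borel"
proof -
  have "K \<in> borel \<rightarrow>\<^sub>M prob_algebra (path_space T)"
    using assms(1) unfolding cond_on_terminal_def by auto
  then show ?thesis
    using assms(2) sets_eq_path_space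
    by (auto intro: measurable_compose[OF measurable_prob_algebraD measurable_emeasure_subprob_algebra])
qed

lemma distr_terminal_density_indicator:
  assumes K: "cond_on_terminal T M K" and A[measurable]: "A \<in> sets M"
  shows "distr (density M (indicator A)) borel (\<lambda>\<omega>. \<omega> T)
      = density (terminal_law T M) (\<lambda>x. emeasure (K x) A)"
proof (rule measure_eqI)
  fix B assume "B \<in> sets (distr (density M (indicator A)) borel (\<lambda>\<omega>. \<omega> T))"
  then have B[measurable]: "B \<in> sets borel" by simp
  have "emeasure (distr (density M (indicator A)) borel (\<lambda>\<omega>. \<omega> T)) B
      = (\<integral>\<^sup>+\<omega>. indicator A \<omega> * indicator ((\<lambda>\<omega>. \<omega> T) -` B \<inter> space M) \<omega> \<partial>M)"
    by (subst emeasure_distr, simp, simp, subst emeasure_density) auto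
  also have "\<dots> = (\<integral>\<^sup>+\<omega>. indicator (A \<inter> {\<omega> \<in> space M. \<omega> T \<in> B}) \<omega> \<partial>M)"
    by (intro nn_integral_cong) (auto split: split_indicator)
  also have "\<dots> = emeasure M (A \<inter> {\<omega> \<in> space M. \<omega> T \<in> B})"
    by (intro nn_integral_indicator) measurable
  also have "\<dots> = (\<integral>\<^sup>+ x \<in> B. emeasure (K x) A \<partial>terminal_law T M)"
    using K A B sets_eq_path_space unfolding cond_on_terminal_def by simp
  finally show "emeasure (distr (density M (indicator A)) borel (\<lambda>\<omega>. \<omega> T)) B
      = emeasure (density (terminal_law T M) (\<lambda>x. emeasure (K x) A)) B"
    using measurable_cond_on_terminal_emeasure[OF K A]
    by (simp add: emeasure_density terminal_law_def)
qed (simp add: terminal_law_def)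

lemma nn_integral_cond_on_terminal:
  assumes K: "cond_on_terminal T M K" and A[measurable]: "A \<in> sets M"
    and g[measurable]: "g \<in> borel_measurable borel"
  shows "(\<integral>\<^sup>+\<omega>. g (\<omega> T) * indicator A \<omega> \<partial>M) = (\<integral>\<^sup>+x. emeasure (K x) A * g x \<partial>terminal_law T M)"
proof -
  have "(\<integral>\<^sup>+\<omega>. g (\<omega> T) * indicator A \<omega> \<partial>M) = (\<integral>\<^sup>+\<omega>. g (\<omega> T) \<partial>density M (indicator A))"
    by (simp add: nn_integral_density mult.commute)
  also have "\<dots> = (\<integral>\<^sup>+x. g x \<partial>distr (density M (indicator A)) borel (\<lambda>\<omega>. \<omega> T))"
    by (rule nn_integral_distr[symmetric]) simp_all
  also have "\<dots> = (\<integral>\<^sup>+x. emeasure (K x) A * g x \<partial>terminal_law T M)"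
    unfolding distr_terminal_density_indicator[OF K A]
    using measurable_cond_on_terminal_emeasure[OF K A]
    by (intro nn_integral_density) (simp_all add: terminal_law_def)
  finally show ?thesis .
qed

lemma bind_cond_on_terminal:
  assumes K: "cond_on_terminal T M K" and prob: "prob_space \<mu>"
    and [measurable]: "p \<in> borel_measurable borel"
    and \<mu>: "\<mu> = density (terminal_law T M) (\<lambda>z. ennreal (p z))"
  shows "\<mu> \<bind> K = density M (\<lambda>\<omega>. ennreal (p (\<omega> T)))"
proof -
  have K_meas: "K \<in> borel \<rightarrow>\<^sub>M prob_algebra (path_space T)"
    using K unfolding cond_on_terminal_def by auto
  have \<mu>_prob: "\<mu> \<in> space (prob_algebra borel)"
    using prob by (simp add: space_prob_algebra \<mu> terminal_law_def)
  show ?thesis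
  proof (rule measure_eqI)
    show sets: "sets (\<mu> \<bind> K) = sets (density M (\<lambda>\<omega>. ennreal (p (\<omega> T))))"
      using sets_bind'[OF \<mu>_prob K_meas] sets_eq_path_space by simp
    fix A assume "A \<in> sets (\<mu> \<bind> K)"
    then have A: "A \<in> sets M" and A_path: "A \<in> sets (path_space T)"
      using sets sets_eq_path_space by auto
    have "emeasure (\<mu> \<bind> K) A = (\<integral>\<^sup>+x. emeasure (K x) A \<partial>\<mu>)"
      by (rule emeasure_bind_prob_algebra[OF \<mu>_prob K_meas A_path])
    also have "\<dots> = (\<integral>\<^sup>+x. emeasure (K x) A * ennreal (p x) \<partial>terminal_law T M)"
      using measurable_cond_on_terminal_emeasure[OF K A] unfolding \<mu>
      by (subst nn_integral_density) (auto simp: terminal_law_def mult.commute)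
    also have "\<dots> = (\<integral>\<^sup>+\<omega>. ennreal (p (\<omega> T)) * indicator A \<omega> \<partial>M)"
      by (rule nn_integral_cond_on_terminal[OF K A, symmetric]) simp
    also have "\<dots> = emeasure (density M (\<lambda>\<omega>. ennreal (p (\<omega> T)))) A"
      using A by (simp add: emeasure_density)
    finally show "emeasure (\<mu> \<bind> K) A = emeasure (density M (\<lambda>\<omega>. ennreal (p (\<omega> T)))) A" .
  qed
qed

end

theorem proposition9:
  fixes T :: real
    and Q :: "(real \<Rightarrow> 'a::euclidean_space) measure"
    and Pi_star :: "'a measure"
    and pi_star :: "'a \<Rightarrow> real"
    and K :: "'a \<Rightarrow> (real \<Rightarrow> 'a) measure"
  assumes "0 < T"
    and "prob_space Q"
    and "sets Q = sets (path_space T)"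
    and "prob_space Pi_star"
    and "pi_star \<in> borel_measurable borel"
    and "\<forall>z. 0 < pi_star z"
    and "Pi_star = density (terminal_law T Q) (\<lambda>z. ennreal (pi_star z))"
    and "cond_on_terminal T Q K"
  shows "markov_path T (Pi_star \<bind> K) \<longleftrightarrow> markov_path T Q"
proof -
  interpret Q: path_measure Q T
    using assms(1-3) prob_space.finite_measure by (auto simp: path_measure_def path_measure_axioms_def)
  have "integrable Q (\<lambda>\<omega>. pi_star (\<omega> T))"
    using assms(4-7) by (intro Q.integrable_terminal_density) (auto intro: less_imp_le)
  moreover have "Pi_star \<bind> K = density Q (\<lambda>\<omega>. ennreal (pi_star (\<omega> T)))"
    by (rule Q.bind_cond_on_terminal[OF assms(8,4,5,7)])
  ultimately show ?thesis
    using Q.markov_path_density_iff assms(5,6) by simp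
qed

end
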